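(* Let $\Omega\subseteq\mathbb{R}^d$ be a nonempty open convex set and let $F:\Omega\to\mathbb{R}$ be a function of Legendre type, with Bregman divergence $D_F$. Then for every $q\in\Omega$ and every $r\ge 0$, both the primal Bregman ball $B_F(q;r)=\{y\in\Omega: D_F(q\|y)\le r\}$ and the dual Bregman ball $B'_F(q;r)=\{y\in\Omega: D_F(y\|q)\le r\}$ are connected subsets of $\mathbb{R}^d$.
   Context: A function $F:\Omega\to\mathbb{R}$ on a nonempty open convex set $\Omega\subseteq\mathbb{R}^d$ is of Legendre type if (I) it is differentiable, (II) it is strictly convex, and (III) if the boundary $\partial\Omega$ is nonempty, then $\|\nabla F(x)\|\to\infty$ as $x\to\partial\Omega$. The Bregman divergence generated by $F$ is $D_F:\Omega\times\Omega\to\mathbb{R}$, $D_F(x\|y)=F(x)-F(y)-\langle\nabla F(y),x-y\rangle$. *)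

theory Defs
  imports "HOL-Analysis.Analysis"
begin

definition strictly_convex_on :: "'a::real_vector set \<Rightarrow> ('a \<Rightarrow> real) \<Rightarrow> bool" where
  "strictly_convex_on S f \<longleftrightarrow>
     (\<forall>x\<in>S. \<forall>y\<in>S. x \<noteq> y \<longrightarrow> (\<forall>t::real. 0 < t \<and> t < 1 \<longrightarrow>
        f ((1 - t) *\<^sub>R x + t *\<^sub>R y) < (1 - t) * f x + t * f y))"

definition grad :: "('a::euclidean_space \<Rightarrow> real) \<Rightarrow> 'a \<Rightarrow> 'a" where
  "grad F x = (THE g. (F has_derivative (\<lambda>h. g \<bullet> h)) (at x))"

definition legendre_type :: "'a::euclidean_space set \<Rightarrow> ('a \<Rightarrow> real) \<Rightarrow> bool" where
  "legendre_type \<Omega> F \<longleftrightarrow>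
     (\<forall>x\<in>\<Omega>. F differentiable (at x)) \<and>
     strictly_convex_on \<Omega> F \<and>
     (frontier \<Omega> \<noteq> {} \<longrightarrow>
        (\<forall>z\<in>frontier \<Omega>. filterlim (\<lambda>x. norm (grad F x)) at_top (at z within \<Omega>)))"

definition bregman :: "('a::euclidean_space \<Rightarrow> real) \<Rightarrow> 'a \<Rightarrow> 'a \<Rightarrow> real" where
  "bregman F x y = F x - F y - grad F y \<bullet> (x - y)"

end

theory Submission
  imports Defs
begin

text \<open>
  The dual ball is a sublevel set of
  \<open>x \<mapsto> D\<^sub>F(x\<parallel>q)\<close>, which is \<open>F\<close> minus an affine function and hence convex.  The primal ball is
  star-shaped about \<open>q\<close>: for \<open>z\<close> on the segment from \<open>q\<close> to \<open>y\<close>, monotonicity of the gradient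
  along that segment gives \<open>D\<^sub>F(q\<parallel>z) \<le> D\<^sub>F(q\<parallel>y)\<close>.
\<close>

lemma has_derivative_grad:
  fixes F :: "'a::euclidean_space \<Rightarrow> real"
  assumes "F differentiable (at x)"
  shows "(F has_derivative (\<lambda>h. grad F x \<bullet> h)) (at x)"
proof -
  obtain D where D: "(F has_derivative D) (at x)"
    using assms unfolding differentiable_def by blast
  define g where "g = adjoint D 1"
  have "D = (\<lambda>h. g \<bullet> h)"
    using adjoint_works[OF has_derivative_linear[OF D]] by (auto simp: g_def inner_commute)
  with D have Dg: "(F has_derivative (\<lambda>h. g \<bullet> h)) (at x)"
    by simp
  have "g' = g" if "(F has_derivative (\<lambda>h. g' \<bullet> h)) (at x)" for g'
    using has_derivative_unique[OF Dg that] vector_eq_rdot by metis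
  then have "grad F x = g"
    unfolding grad_def using Dg by (rule the_equality[rotated])
  with Dg show ?thesis
    by simp
qed

lemma strictly_convex_on_imp_convex_on:
  assumes "strictly_convex_on S F" "convex S"
  shows "convex_on S F"
proof (rule convex_onI[OF _ assms(2)])
  fix t x y assume "(0::real) < t" "t < 1" "x \<in> S" "y \<in> S"
  with assms(1) show "F ((1 - t) *\<^sub>R x + t *\<^sub>R y) \<le> (1 - t) * F x + t * F y"
    unfolding strictly_convex_on_def
    by (cases "x = y") (auto simp: scaleR_collapse algebra_simps less_imp_le)
qed

lemma convex_on_above_tangent:
  fixes F :: "'a::real_normed_vector \<Rightarrow> real"
  assumes "convex_on S F" "x \<in> S" "y \<in> S" "(F has_derivative F') (at x within S)"
  shows "F' (y - x) \<le> F y - F x"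
proof -
  define h where "h t = F (x + t *\<^sub>R (y - x))" for t :: real
  have segment: "x + t *\<^sub>R (y - x) \<in> S" if "t \<in> {0..1}" for t
    using convex_onD[OF assms(1), of t x y] that assms(2,3) convex_on_imp_convex[OF assms(1)]
    by (auto simp: algebra_simps convex_alt)
  have "((\<lambda>t. x + t *\<^sub>R (y - x)) has_derivative (\<lambda>t. t *\<^sub>R (y - x))) (at 0 within {0..1})"
    by (auto intro!: derivative_eq_intros)
  moreover have "(F has_derivative F') (at (x + 0 *\<^sub>R (y - x)) within (\<lambda>t. x + t *\<^sub>R (y - x)) ` {0..1})"
    using assms(4) segment by (auto intro: has_derivative_subset)
  ultimately have "(h has_derivative (\<lambda>t. F' (t *\<^sub>R (y - x)))) (at 0 within {0..1})"
    unfolding h_def by (rule has_derivative_in_compose)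
  moreover have "F' (t *\<^sub>R (y - x)) = F' (y - x) * t" for t
    using linear.scaleR[OF has_derivative_linear[OF assms(4)]] by simp
  ultimately have "(h has_field_derivative F' (y - x)) (at 0 within {0..1})"
    by (simp add: has_field_derivative_def)
  then have lim: "((\<lambda>t. (h t - h 0) / t) \<longlongrightarrow> F' (y - x)) (at_right 0)"
    by (simp add: has_field_derivative_iff at_within_Icc_at_right)
  have "(h t - h 0) / t \<le> F y - F x" if "t \<in> {0<..<1}" for t
  proof -
    have "h t - h 0 \<le> (F y - F x) * t"
      using convex_onD[OF assms(1), of t x y] that assms(2,3) by (simp add: h_def algebra_simps)
    with that show ?thesis
      by (simp add: pos_divide_le_eq)
  qed
  then have "\<forall>\<^sub>F t in at_right 0. (h t - h 0) / t \<le> F y - F x"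
    using eventually_at_right_real[of 0 1] by (auto elim: eventually_mono)
  with lim show ?thesis
    by (rule tendsto_upperbound) simp
qed

lemma bregman_nonneg:
  fixes F :: "'a::euclidean_space \<Rightarrow> real"
  assumes "convex_on S F" "x \<in> S" "y \<in> S" "F differentiable (at y)"
  shows "0 \<le> bregman F x y"
  using convex_on_above_tangent[OF assms(1,3,2) has_derivative_at_withinI[OF has_derivative_grad[OF assms(4)]]]
  by (simp add: bregman_def)

lemma bregman_le_on_segment:
  fixes F :: "'a::euclidean_space \<Rightarrow> real"
  assumes "convex_on S F" "\<forall>x\<in>S. F differentiable (at x)"
    and "q \<in> S" "y \<in> S" "z \<in> closed_segment q y"
  shows "bregman F q z \<le> bregman F q y"
proof -
  obtain s where s: "0 \<le> s" "s \<le> 1" and z_def: "z = (1 - s) *\<^sub>R q + s *\<^sub>R y"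
    using assms(5) unfolding closed_segment_def by blast
  have "z \<in> S"
    using assms(3-5) convex_on_imp_convex[OF assms(1)] closed_segment_subset by blast
  show ?thesis
  proof (cases "s = 1")
    case True
    then show ?thesis by (simp add: z_def)
  next
    case False
    define w where "w = q - y"
    have zy: "z - y = (1 - s) *\<^sub>R w" and yz: "y - z = - ((1 - s) *\<^sub>R w)"
      and qz: "q - z = s *\<^sub>R w"
      by (simp_all add: z_def w_def algebra_simps)
    have "0 \<le> bregman F z y" "0 \<le> bregman F y z"
      using bregman_nonneg[OF assms(1)] assms(2,4) \<open>z \<in> S\<close> by auto
    then have zy_tangent: "(1 - s) * (grad F y \<bullet> w) \<le> F z - F y"
      and yz_tangent: "F z - F y \<le> (1 - s) * (grad F z \<bullet> w)"
      by (simp_all add: bregman_def zy yz)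
    have "s * (grad F y \<bullet> w) \<le> s * (grad F z \<bullet> w)"
      using order_trans[OF zy_tangent yz_tangent] s False by (simp add: mult_left_mono)
    with zy_tangent show ?thesis
      by (simp add: bregman_def qz w_def[symmetric] algebra_simps)
  qed
qed

lemma starlike_bregman_ball:
  fixes F :: "'a::euclidean_space \<Rightarrow> real"
  assumes "convex_on S F" "\<forall>x\<in>S. F differentiable (at x)" "q \<in> S" "0 \<le> r"
  shows "starlike {y \<in> S. bregman F q y \<le> r}"
  unfolding starlike_def
proof (intro bexI ballI subsetI)
  show "q \<in> {y \<in> S. bregman F q y \<le> r}"
    using assms(3,4) by (simp add: bregman_def)
  fix y z assume y: "y \<in> {y \<in> S. bregman F q y \<le> r}" and z: "z \<in> closed_segment q y"
  then have "z \<in> S"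
    using assms(3) convex_on_imp_convex[OF assms(1)] closed_segment_subset by blast
  moreover have "bregman F q z \<le> r"
    using bregman_le_on_segment[OF assms(1-3) _ z] y by fastforce
  ultimately show "z \<in> {y \<in> S. bregman F q y \<le> r}"
    by simp
qed

lemma convex_on_sublevel_set:
  assumes "convex_on S f"
  shows "convex {x \<in> S. f x \<le> r}"
proof (rule convexI)
  fix x y and u v :: real
  assume x: "x \<in> {x \<in> S. f x \<le> r}" and y: "y \<in> {x \<in> S. f x \<le> r}"
    and uv: "0 \<le> u" "0 \<le> v" "u + v = 1"
  then have "f (u *\<^sub>R x + v *\<^sub>R y) \<le> u * f x + v * f y"
    using assms unfolding convex_on_def by blast
  also have "\<dots> \<le> u * r + v * r"
    using x y uv by (intro add_mono mult_left_mono) auto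
  finally show "u *\<^sub>R x + v *\<^sub>R y \<in> {x \<in> S. f x \<le> r}"
    using x y uv convexD[OF convex_on_imp_convex[OF assms]] by (simp flip: distrib_right)
qed

lemma convex_on_bregman_first:
  fixes F :: "'a::euclidean_space \<Rightarrow> real"
  assumes "convex_on S F"
  shows "convex_on S (\<lambda>x. bregman F x q)"
proof -
  have "convex_on S (\<lambda>x. grad F q \<bullet> (q - x) - F q)"
    by (rule convex_onI[OF _ convex_on_imp_convex[OF assms]])
      (simp add: inner_diff_right algebra_simps)
  from convex_on_add[OF assms this] show ?thesis
    by (simp add: bregman_def inner_diff_right algebra_simps)
qed

theorem lemma2:
  fixes \<Omega> :: "'a::euclidean_space set" and F :: "'a \<Rightarrow> real" and q :: 'a and r :: real
  assumes "open \<Omega>" and "convex \<Omega>" and "\<Omega> \<noteq> {}"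
    and "legendre_type \<Omega> F"
    and "q \<in> \<Omega>" and "r \<ge> 0"
  shows "connected {y \<in> \<Omega>. bregman F q y \<le> r} \<and> connected {y \<in> \<Omega>. bregman F y q \<le> r}"
proof
  have differentiable: "\<forall>x\<in>\<Omega>. F differentiable (at x)"
    and convex: "convex_on \<Omega> F"
    using assms(2,4) strictly_convex_on_imp_convex_on unfolding legendre_type_def by blast+
  show "connected {y \<in> \<Omega>. bregman F q y \<le> r}"
    using starlike_bregman_ball[OF convex differentiable assms(5,6)] by (rule starlike_imp_connected)
  show "connected {y \<in> \<Omega>. bregman F y q \<le> r}"
    using convex_on_sublevel_set[OF convex_on_bregman_first[OF convex]] by (rule convex_connected)
qed

end
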